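(* Let $H$ be a connected graph with a pendant vertex $w$, and let $G$ be the graph formed from $H$ by adding two new vertices $u$ and $v$ which are adjacent to $w$ and to each other but have no other neighbors. If $\overline{H}$ has an orthogonal vector representation in $\mathbb{R}^3$ consisting of pairwise linearly independent vectors, then so does $\overline{G}$.
   Context: All graphs are finite and simple; $\overline{G}$ denotes the complement of $G$. A pendant vertex is a vertex of degree 1. An orthogonal vector representation of a graph $G=(V,E)$ in $\mathbb{R}^d$ is a map $\phi:V\to\mathbb{R}^d$ with $\phi(v)\neq 0$ for all $v$, and for distinct $u,v$: $\langle\phi(u),\phi(v)\rangle=0$ if and only if $uv\notin E$. *)

theory Defs
  imports "HOL-Analysis.Analysis"
begin

definition simple_graph :: "'a set \<Rightarrow> ('a \<Rightarrow> 'a \<Rightarrow> bool) \<Rightarrow> bool" where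
  "simple_graph V E \<longleftrightarrow> finite V \<and> (\<forall>x y. E x y \<longrightarrow> x \<in> V \<and> y \<in> V)
     \<and> (\<forall>x y. E x y \<longrightarrow> E y x) \<and> (\<forall>x. \<not> E x x)"

definition graph_connected :: "'a set \<Rightarrow> ('a \<Rightarrow> 'a \<Rightarrow> bool) \<Rightarrow> bool" where
  "graph_connected V E \<longleftrightarrow> (\<forall>x\<in>V. \<forall>y\<in>V. E\<^sup>*\<^sup>* x y)"

definition degree :: "'a set \<Rightarrow> ('a \<Rightarrow> 'a \<Rightarrow> bool) \<Rightarrow> 'a \<Rightarrow> nat" where
  "degree V E x = card {y \<in> V. E x y}"

definition pendant :: "'a set \<Rightarrow> ('a \<Rightarrow> 'a \<Rightarrow> bool) \<Rightarrow> 'a \<Rightarrow> bool" where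
  "pendant V E x \<longleftrightarrow> x \<in> V \<and> degree V E x = 1"

definition complement :: "'a set \<Rightarrow> ('a \<Rightarrow> 'a \<Rightarrow> bool) \<Rightarrow> 'a \<Rightarrow> 'a \<Rightarrow> bool" where
  "complement V E x y \<longleftrightarrow> x \<in> V \<and> y \<in> V \<and> x \<noteq> y \<and> \<not> E x y"

definition orth_rep :: "'a set \<Rightarrow> ('a \<Rightarrow> 'a \<Rightarrow> bool) \<Rightarrow> ('a \<Rightarrow> real^3) \<Rightarrow> bool" where
  "orth_rep V E \<phi> \<longleftrightarrow> (\<forall>x\<in>V. \<phi> x \<noteq> 0) \<and>
     (\<forall>x\<in>V. \<forall>y\<in>V. x \<noteq> y \<longrightarrow> (\<phi> x \<bullet> \<phi> y = 0 \<longleftrightarrow> \<not> E x y))"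

definition pairwise_lin_indep :: "'a set \<Rightarrow> ('a \<Rightarrow> real^3) \<Rightarrow> bool" where
  "pairwise_lin_indep V \<phi> \<longleftrightarrow> (\<forall>x\<in>V. \<forall>y\<in>V. x \<noteq> y \<longrightarrow>
     (\<forall>a b::real. a *\<^sub>R \<phi> x + b *\<^sub>R \<phi> y = 0 \<longrightarrow> a = 0 \<and> b = 0))"

definition add_triangle :: "('a \<Rightarrow> 'a \<Rightarrow> bool) \<Rightarrow> 'a \<Rightarrow> 'a \<Rightarrow> 'a \<Rightarrow> 'a \<Rightarrow> 'a \<Rightarrow> bool" where
  "add_triangle E w u v x y \<longleftrightarrow> E x y \<or>
     {x, y} = {u, w} \<or> {x, y} = {v, w} \<or> {x, y} = {u, v}"

end

theory Submission
  imports Defs "HOL-Analysis.Cross3"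
begin

text \<open>Every vector of H other than a's is independent of a, so it fails to be orthogonal to
  the line through p + s q (and to its orthogonal line in that plane) for all but finitely many
  real s; hence a suitable rotation of (p, q) is orthogonal to a and to nothing else.\<close>

unbundle cross3_syntax

definition lin_indep_pair :: "'v::real_vector \<Rightarrow> 'v \<Rightarrow> bool" where
  "lin_indep_pair p q \<longleftrightarrow> (\<forall>a b. a *\<^sub>R p + b *\<^sub>R q = 0 \<longrightarrow> a = 0 \<and> b = 0)"

lemma lin_indep_pair_commute: "lin_indep_pair p q \<longleftrightarrow> lin_indep_pair q p"
  unfolding lin_indep_pair_def by (metis add.commute)

lemma pairwise_lin_indep_iff:
  "pairwise_lin_indep V \<phi> \<longleftrightarrow> (\<forall>x\<in>V. \<forall>y\<in>V. x \<noteq> y \<longrightarrow> lin_indep_pair (\<phi> x) (\<phi> y))"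
  unfolding pairwise_lin_indep_def lin_indep_pair_def by blast

lemma lin_indep_pair_not_in_span:
  assumes "lin_indep_pair p q"
  shows "p \<notin> span {q}"
proof
  assume "p \<in> span {q}"
  then obtain c where "p = c *\<^sub>R q" by (auto simp: span_singleton)
  then have "1 *\<^sub>R p + (- c) *\<^sub>R q = 0" by simp
  with assms have "(1::real) = 0" unfolding lin_indep_pair_def by blast
  then show False by simp
qed

lemma lin_indep_pair_if_separated:
  fixes p q r :: "'v::real_inner"
  assumes "r \<bullet> p = 0" "r \<bullet> q \<noteq> 0" "p \<noteq> 0"
  shows "lin_indep_pair p q"
  unfolding lin_indep_pair_def
proof (intro allI impI)
  fix a b assume comb: "a *\<^sub>R p + b *\<^sub>R q = 0"
  then have "r \<bullet> (a *\<^sub>R p + b *\<^sub>R q) = 0" by simp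
  then have "b * (r \<bullet> q) = 0" using assms(1) by (simp add: inner_add_right)
  then have "b = 0" using assms(2) by simp
  with comb assms(3) show "a = 0 \<and> b = 0" by simp
qed

lemma lin_indep_pair_orthogonal:
  fixes p q :: "'v::real_inner"
  assumes "p \<bullet> q = 0" "p \<noteq> 0" "q \<noteq> 0"
  shows "lin_indep_pair p q"
  using assms by (intro lin_indep_pair_if_separated[of q]) (auto simp: inner_commute)

lemma orthogonal_frame_real3:
  fixes a :: "real^3"
  assumes a: "a \<noteq> 0"
  obtains e1 e2 where "e1 \<noteq> 0" "e2 \<noteq> 0" "a \<bullet> e1 = 0" "a \<bullet> e2 = 0" "e1 \<bullet> e2 = 0"
    "\<And>y. y \<bullet> e1 = 0 \<Longrightarrow> y \<bullet> e2 = 0 \<Longrightarrow> y \<in> span {a}"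
proof -
  obtain c where c: "a \<times> c \<noteq> 0" using cross_basis_nonzero[OF a] by blast
  define e1 where "e1 = a \<times> c"
  define e2 where "e2 = a \<times> e1"
  have ae1: "a \<bullet> e1 = 0" and ae2: "a \<bullet> e2 = 0" and e12: "e1 \<bullet> e2 = 0"
    unfolding e1_def e2_def by (simp_all add: dot_cross_self)
  have e1: "e1 \<noteq> 0" using c e1_def by simp
  have "(norm e2)\<^sup>2 = (norm a)\<^sup>2 * (norm e1)\<^sup>2"
    unfolding e2_def using norm_cross[of a e1] ae1 by simp
  with a e1 have e2: "e2 \<noteq> 0" by auto
  show ?thesis
  proof (rule that[OF e1 e2 ae1 ae2 e12])
    fix y assume y1: "y \<bullet> e1 = 0" and y2: "y \<bullet> e2 = 0"
    define z where "z = (a \<bullet> a) *\<^sub>R y - (a \<bullet> y) *\<^sub>R a"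
    have za: "z \<bullet> a = 0" unfolding z_def by (simp add: algebra_simps inner_commute)
    have z1: "z \<bullet> e1 = 0" unfolding z_def using y1 ae1 by (simp add: algebra_simps)
    have z2: "z \<bullet> e2 = 0" unfolding z_def using y2 ae2 by (simp add: algebra_simps)
    \<comment> \<open>Lagrange: z \<times> (a \<times> e1) = (z \<bullet> e1) a - (z \<bullet> a) e1.\<close>
    have "z \<times> e2 = 0" unfolding e2_def using Lagrange[of z a e1] z1 za by simp
    with z2 e2 norm_and_cross_eq_0[of z e2] have "z = 0" by auto
    then have "(a \<bullet> a) *\<^sub>R y \<in> span {a}" unfolding z_def by (simp add: span_base span_scale)
    then have "inverse (a \<bullet> a) *\<^sub>R ((a \<bullet> a) *\<^sub>R y) \<in> span {a}" by (rule span_scale)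
    with a show "y \<in> span {a}" by simp
  qed
qed

lemma finite_affine_roots:
  fixes c d :: real
  assumes "c \<noteq> 0 \<or> d \<noteq> 0"
  shows "finite {s. c + s * d = 0}"
proof (cases "d = 0")
  case True
  with assms show ?thesis by simp
next
  case False
  then have "{s. c + s * d = 0} = {- c / d}" by (auto simp: field_simps)
  then show ?thesis by simp
qed

lemma orthogonal_pair_avoiding_finite_real3:
  fixes a :: "real^3" and S :: "(real^3) set"
  assumes a: "a \<noteq> 0" and S: "finite S" "\<And>y. y \<in> S \<Longrightarrow> y \<notin> span {a}"
  obtains p q where "p \<noteq> 0" "q \<noteq> 0" "p \<bullet> a = 0" "q \<bullet> a = 0" "p \<bullet> q = 0"
    "\<And>y. y \<in> S \<Longrightarrow> p \<bullet> y \<noteq> 0 \<and> q \<bullet> y \<noteq> 0"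
proof -
  obtain e1 e2 where e1: "e1 \<noteq> 0" and e2: "e2 \<noteq> 0" and ae: "a \<bullet> e1 = 0" "a \<bullet> e2 = 0"
    and e12: "e1 \<bullet> e2 = 0" and frame: "\<And>y. y \<bullet> e1 = 0 \<Longrightarrow> y \<bullet> e2 = 0 \<Longrightarrow> y \<in> span {a}"
    using orthogonal_frame_real3[OF a] by metis
  define n1 where "n1 = e1 \<bullet> e1"
  define n2 where "n2 = e2 \<bullet> e2"
  have n: "n1 \<noteq> 0" "n2 \<noteq> 0" using e1 e2 by (simp_all add: n1_def n2_def)
  have coords: "e1 \<bullet> y \<noteq> 0 \<or> e2 \<bullet> y \<noteq> 0" if "y \<in> S" for y
    using frame[of y] S(2)[OF that] by (auto simp: inner_commute)
  \<comment> \<open>The parameters s for which e1 + s e2 or its orthogonal partner in the plane meets some y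
    of S orthogonally.\<close>
  define bad where "bad = (\<Union>y\<in>S. {s. e1 \<bullet> y + s * (e2 \<bullet> y) = 0}
                                \<union> {s. n1 * (e2 \<bullet> y) + s * (- n2 * (e1 \<bullet> y)) = 0})"
  have "finite bad"
    unfolding bad_def
    by (intro finite_UN_I finite_UnI finite_affine_roots S(1)) (use coords n in auto)
  then obtain s where s: "s \<notin> bad" using ex_new_if_finite[OF infinite_UNIV_char_0] by blast
  define p where "p = e1 + s *\<^sub>R e2"
  define q where "q = (- s * n2) *\<^sub>R e1 + n1 *\<^sub>R e2"
  show ?thesis
  proof
    have "p \<bullet> e1 = n1"
      unfolding p_def n1_def using e12 by (simp add: inner_add_left inner_commute[of e2 e1])
    with n show "p \<noteq> 0" by auto
    have "q \<bullet> e2 = n1 * n2"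
      unfolding q_def n2_def using e12 by (simp add: inner_add_left inner_diff_left)
    with n show "q \<noteq> 0" by auto
    show "p \<bullet> a = 0" "q \<bullet> a = 0"
      unfolding p_def q_def using ae
      by (simp_all add: inner_commute[of _ a] inner_add_right inner_diff_right)
    show "p \<bullet> q = 0" unfolding p_def q_def n1_def n2_def using e12
      by (simp add: inner_add_left inner_add_right inner_commute algebra_simps)
  next
    fix y assume "y \<in> S"
    with s show "p \<bullet> y \<noteq> 0 \<and> q \<bullet> y \<noteq> 0"
      unfolding bad_def p_def q_def by (auto simp: inner_add_left algebra_simps)
  qed
qed

locale triangle_extension =
  fixes V :: "'a set" and E :: "'a \<Rightarrow> 'a \<Rightarrow> bool" and w u v :: 'a
    and \<phi> :: "'a \<Rightarrow> real^3" and p q :: "real^3"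
  assumes graph: "simple_graph V E"
    and w: "w \<in> V" and u: "u \<notin> V" and v: "v \<notin> V" and uv: "u \<noteq> v"
    and rep: "orth_rep V (complement V E) \<phi>"
    and indep: "pairwise_lin_indep V \<phi>"
    and p: "p \<noteq> 0" "p \<bullet> \<phi> w = 0" and q: "q \<noteq> 0" "q \<bullet> \<phi> w = 0" and pq: "p \<bullet> q = 0"
    and new_nonorth: "\<And>x. x \<in> V \<Longrightarrow> x \<noteq> w \<Longrightarrow> p \<bullet> \<phi> x \<noteq> 0 \<and> q \<bullet> \<phi> x \<noteq> 0"
begin

abbreviation "W \<equiv> V \<union> {u, v}"
abbreviation "C \<equiv> complement W (add_triangle E w u v)"
definition \<psi> :: "'a \<Rightarrow> real^3" where "\<psi> = \<phi>(u := p, v := q)"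

lemma C_commute: "C x y \<longleftrightarrow> C y x"
  using graph unfolding complement_def add_triangle_def simple_graph_def by blast

lemma C_old: "x \<in> V \<Longrightarrow> y \<in> V \<Longrightarrow> C x y \<longleftrightarrow> complement V E x y"
  using u v unfolding complement_def add_triangle_def by (auto simp: doubleton_eq_iff)

lemma C_new: "z \<in> {u, v} \<Longrightarrow> x \<in> V \<Longrightarrow> C z x \<longleftrightarrow> x \<noteq> w"
  using graph w u v uv unfolding complement_def add_triangle_def simple_graph_def
  by (auto simp: doubleton_eq_iff)

lemma not_C_uv: "\<not> C u v"
  unfolding complement_def add_triangle_def by simp

lemma psi_old: "x \<in> V \<Longrightarrow> \<psi> x = \<phi> x"
  using u v by (auto simp: \<psi>_def)

lemma psi_u: "\<psi> u = p" and psi_v: "\<psi> v = q"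
  using uv by (auto simp: \<psi>_def)

lemma psi_new_nonzero: "z \<in> {u, v} \<Longrightarrow> \<psi> z \<noteq> 0"
  using p q by (auto simp: psi_u psi_v)

lemma psi_new_orthogonal: "z \<in> {u, v} \<Longrightarrow> x \<in> V \<Longrightarrow> \<psi> z \<bullet> \<psi> x = 0 \<longleftrightarrow> x = w"
  using p q new_nonorth[of x] by (cases "x = w") (auto simp: psi_old psi_u psi_v)

lemma psi_new_partner:
  assumes "z \<in> {u, v}"
  obtains z' where "z' \<in> {u, v}" "\<psi> z' \<bullet> \<psi> z = 0"
  using assms pq that[of v] that[of u] by (auto simp: psi_u psi_v inner_commute)

lemma orth_rep_extension: "orth_rep W C \<psi>"
  unfolding orth_rep_def
proof (intro conjI ballI impI)
  fix x assume x: "x \<in> W"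
  show "\<psi> x \<noteq> 0"
  proof (cases "x \<in> V")
    case True
    with rep show ?thesis by (simp add: orth_rep_def psi_old)
  next
    case False
    with x show ?thesis by (intro psi_new_nonzero) auto
  qed
next
  fix x y assume x: "x \<in> W" and y: "y \<in> W" and xy: "x \<noteq> y"
  consider "x \<in> V" "y \<in> V" | "x \<in> {u, v}" "y \<in> V" | "x \<in> V" "y \<in> {u, v}"
    | "{x, y} = {u, v}"
    using x y xy by auto
  then show "\<psi> x \<bullet> \<psi> y = 0 \<longleftrightarrow> \<not> C x y"
  proof cases
    case 1
    then show ?thesis using rep xy C_old[OF 1] by (simp add: orth_rep_def psi_old)
  next
    case 2
    then show ?thesis using psi_new_orthogonal[OF 2] C_new[OF 2] by simp
  next
    case 3
    then show ?thesis
      using psi_new_orthogonal[of y x] C_new[of y x] C_commute[of x y] by (simp add: inner_commute)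
  next
    case 4
    then show ?thesis
      using pq not_C_uv C_commute by (auto simp: doubleton_eq_iff inner_commute psi_u psi_v)
  qed
qed

lemma lin_indep_pair_new_old:
  assumes z: "z \<in> {u, v}" and x: "x \<in> V"
  shows "lin_indep_pair (\<psi> z) (\<psi> x)"
proof (cases "x = w")
  case True
  then show ?thesis
    using z x rep psi_new_nonzero psi_new_orthogonal
    by (intro lin_indep_pair_orthogonal) (auto simp: orth_rep_def psi_old)
next
  case False
  \<comment> \<open>The other new vector is orthogonal to \<psi> z but not to \<phi> x.\<close>
  obtain z' where "z' \<in> {u, v}" "\<psi> z' \<bullet> \<psi> z = 0" using psi_new_partner[OF z] .
  with False z x show ?thesis
    by (intro lin_indep_pair_if_separated[of "\<psi> z'"] psi_new_nonzero)
      (auto simp: psi_new_orthogonal)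
qed

lemma pairwise_lin_indep_extension: "pairwise_lin_indep W \<psi>"
  unfolding pairwise_lin_indep_iff
proof (intro ballI impI)
  fix x y assume x: "x \<in> W" and y: "y \<in> W" and xy: "x \<noteq> y"
  consider "x \<in> V" "y \<in> V" | "x \<in> {u, v}" "y \<in> V" | "x \<in> V" "y \<in> {u, v}"
    | "{x, y} = {u, v}"
    using x y xy by auto
  then show "lin_indep_pair (\<psi> x) (\<psi> y)"
  proof cases
    case 1
    then show ?thesis using indep xy by (simp add: pairwise_lin_indep_iff psi_old)
  next
    case 2
    then show ?thesis by (rule lin_indep_pair_new_old)
  next
    case 3
    then show ?thesis by (subst lin_indep_pair_commute) (rule lin_indep_pair_new_old)
  next
    case 4
    then show ?thesis
      using pq p q
      by (auto simp: doubleton_eq_iff inner_commute psi_u psi_v intro: lin_indep_pair_orthogonal)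
  qed
qed

end

theorem lemma4p6:
  fixes V :: "'a set" and E :: "'a \<Rightarrow> 'a \<Rightarrow> bool" and w u v :: 'a
  assumes "simple_graph V E"
    and "graph_connected V E"
    and "pendant V E w"
    and "u \<notin> V" and "v \<notin> V" and "u \<noteq> v"
    and "\<exists>\<phi>. orth_rep V (complement V E) \<phi> \<and> pairwise_lin_indep V \<phi>"
  shows "\<exists>\<psi>. orth_rep (V \<union> {u, v}) (complement (V \<union> {u, v}) (add_triangle E w u v)) \<psi>
              \<and> pairwise_lin_indep (V \<union> {u, v}) \<psi>"
proof -
  obtain \<phi> where rep: "orth_rep V (complement V E) \<phi>" and indep: "pairwise_lin_indep V \<phi>"
    using assms(7) by blast
  have w: "w \<in> V" using assms(3) by (simp add: pendant_def)
  have "\<phi> w \<noteq> 0" using rep w by (simp add: orth_rep_def)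
  moreover have "finite (\<phi> ` (V - {w}))" using assms(1) by (simp add: simple_graph_def)
  moreover have "y \<notin> span {\<phi> w}" if "y \<in> \<phi> ` (V - {w})" for y
    using that indep w by (auto simp: pairwise_lin_indep_iff dest: lin_indep_pair_not_in_span)
  ultimately obtain p q where "p \<noteq> 0" "q \<noteq> 0" "p \<bullet> \<phi> w = 0" "q \<bullet> \<phi> w = 0" "p \<bullet> q = 0"
    "\<And>x. x \<in> V \<Longrightarrow> x \<noteq> w \<Longrightarrow> p \<bullet> \<phi> x \<noteq> 0 \<and> q \<bullet> \<phi> x \<noteq> 0"
    by (rule orthogonal_pair_avoiding_finite_real3) auto
  then interpret triangle_extension V E w u v \<phi> p q
    using assms(1,4-6) w rep indep by unfold_locales
  show ?thesis using orth_rep_extension pairwise_lin_indep_extension by blast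
qed

end
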